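(* Let $i\ge 0$ and let $K_1,K_2$ be finite simplicial complexes such that $B_i(K_1)$ and $B_i(K_2)$ are connected ($K_1,K_2$ are $(i+1)$-path connected). Then $B_i(K_1\Box K_2)$ is balanced if and only if $B_i(K_1)$ and $B_i(K_2)$ are both balanced.
   Context: The Cartesian product $K_1\Box K_2$ is the complex on $V(K_1)\times V(K_2)$ whose faces are $F\times v=\{(u_0,v),\dots,(u_s,v)\}$ for $F=\{u_0,\dots,u_s\}\in K_1$, $v\in V(K_2)$, and $u\times F'=\{(u,v_0),\dots,(u,v_t)\}$ for $u\in V(K_1)$, $F'=\{v_0,\dots,v_t\}\in K_2$. $S_j(K)$ is the set of faces of cardinality $j+1$. For a complex $K$ with an orientation (ordering of each face up to even permutations), $B_i(K)$ is the signed bipartite graph on $S_i(K)\cup S_{i+1}(K)$ with edges $\{F,\bar F\}$ for $F\subset\bar F$, signed by the boundary incidence sign $\mathrm{sgn}([F],\partial[\bar F])\in\{\pm1\}$ ($(-1)^j$ if $F$ is $\bar F$ minus its $j$-th vertex with agreeing orientation, negated otherwise). A signed graph is balanced if every cycle has positive sign product; this is independent of the orientation. *)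

theory Defs
  imports Main "HOL-Combinatorics.Permutations"
begin

definition simplicial_complex :: "'a set set \<Rightarrow> bool" where
  "simplicial_complex K \<longleftrightarrow> finite K \<and>
     (\<forall>F\<in>K. finite F \<and> F \<noteq> {} \<and> (\<forall>G. G \<subseteq> F \<and> G \<noteq> {} \<longrightarrow> G \<in> K))"

definition vertices :: "'a set set \<Rightarrow> 'a set" where
  "vertices K = \<Union>K"

definition faces_of_dim :: "'a set set \<Rightarrow> nat \<Rightarrow> 'a set set" where
  "faces_of_dim K j = {F \<in> K. card F = j + 1}"

definition cart_prod :: "'a set set \<Rightarrow> 'b set set \<Rightarrow> ('a \<times> 'b) set set" where
  "cart_prod K1 K2 =
     {(\<lambda>u. (u, v)) ` F | F v. F \<in> K1 \<and> v \<in> vertices K2} \<union>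
     {(\<lambda>v. (u, v)) ` F' | u F'. u \<in> vertices K1 \<and> F' \<in> K2}"

text \<open>An orientation: a representative ordering (distinct list) of each face;
  orderings are only relevant up to even permutations.\<close>
definition orientation :: "'a set set \<Rightarrow> ('a set \<Rightarrow> 'a list) \<Rightarrow> bool" where
  "orientation K ori \<longleftrightarrow> (\<forall>F\<in>K. distinct (ori F) \<and> set (ori F) = F)"

definition list_perm :: "'a list \<Rightarrow> 'a list \<Rightarrow> 'a \<Rightarrow> 'a" where
  "list_perm xs ys = (\<lambda>x. case map_of (zip xs ys) x of Some y \<Rightarrow> y | None \<Rightarrow> x)"

text \<open>Boundary incidence sign sgn([F], \<partial>[Fb]) for F \<subset> Fb with |Fb| = |F| + 1:
  Fb is ordered as L = ori Fb, F = Fb minus the j-th entry of L; the induced ordering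
  of F is L with that entry deleted; the sign is (-1)^j if it agrees (up to even
  permutation) with ori F, and negated otherwise.\<close>
definition incidence_sign :: "('a set \<Rightarrow> 'a list) \<Rightarrow> 'a set \<Rightarrow> 'a set \<Rightarrow> int" where
  "incidence_sign ori F Fb =
     (let L = ori Fb;
          j = (THE j. j < length L \<and> L ! j \<notin> F);
          L' = take j L @ drop (Suc j) L
      in (-1) ^ j * sign (list_perm L' (ori F)))"

definition B_verts :: "'a set set \<Rightarrow> nat \<Rightarrow> 'a set set" where
  "B_verts K i = faces_of_dim K i \<union> faces_of_dim K (i + 1)"

definition B_adj :: "'a set set \<Rightarrow> nat \<Rightarrow> 'a set \<Rightarrow> 'a set \<Rightarrow> bool" where
  "B_adj K i X Y \<longleftrightarrow>
     (X \<in> faces_of_dim K i \<and> Y \<in> faces_of_dim K (i + 1) \<and> X \<subseteq> Y) \<or>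
     (Y \<in> faces_of_dim K i \<and> X \<in> faces_of_dim K (i + 1) \<and> Y \<subseteq> X)"

definition B_sign :: "('a set \<Rightarrow> 'a list) \<Rightarrow> 'a set \<Rightarrow> 'a set \<Rightarrow> int" where
  "B_sign ori X Y = (if X \<subseteq> Y then incidence_sign ori X Y else incidence_sign ori Y X)"

definition B_connected :: "'a set set \<Rightarrow> nat \<Rightarrow> bool" where
  "B_connected K i \<longleftrightarrow> B_verts K i \<noteq> {} \<and>
     (\<forall>X\<in>B_verts K i. \<forall>Y\<in>B_verts K i. \<exists>ws. ws \<noteq> [] \<and> hd ws = X \<and> last ws = Y \<and>
        (\<forall>k. Suc k < length ws \<longrightarrow> B_adj K i (ws ! k) (ws ! Suc k)))"

definition B_cycle :: "'a set set \<Rightarrow> nat \<Rightarrow> 'a set list \<Rightarrow> bool" where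
  "B_cycle K i cs \<longleftrightarrow> length cs \<ge> 3 \<and> distinct cs \<and> set cs \<subseteq> B_verts K i \<and>
     (\<forall>k < length cs. B_adj K i (cs ! k) (cs ! ((k + 1) mod length cs)))"

definition B_balanced :: "'a set set \<Rightarrow> nat \<Rightarrow> ('a set \<Rightarrow> 'a list) \<Rightarrow> bool" where
  "B_balanced K i ori \<longleftrightarrow>
     (\<forall>cs. B_cycle K i cs \<longrightarrow>
        (\<Prod>k<length cs. B_sign ori (cs ! k) (cs ! ((k + 1) mod length cs))) = 1)"

end

theory Submission
  imports Defs
begin

text \<open>A fiber \<open>K\<^sub>1 \<box> v\<close> embeds \<open>K\<^sub>1\<close> into the product, and an injective face map changes incidence
  signs only by the switching that compares orientations, which cancels around every cycle; so
  balance of the product passes to the factors. Conversely, by Harary's theorem a connected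
  signed graph is balanced iff its edge signs have the form \<open>\<phi> X * \<phi> Y\<close> for a \<open>\<plusminus>1\<close>-valued
  potential \<open>\<phi>\<close>. For \<open>i > 0\<close> every edge of \<open>B\<^sub>i(K\<^sub>1 \<box> K\<^sub>2)\<close> lies in a single fiber, so the
  potentials of the factors, corrected by the orientation switching, glue to a potential of the
  product. For \<open>i = 0\<close> a potential of \<open>B\<^sub>0\<close> amounts to a proper 2-colouring of the vertices,
  and \<open>(u, v) \<mapsto> c\<^sub>1 u * c\<^sub>2 v\<close> is one for the product.\<close>

section \<open>Relative sign of two orderings\<close>

definition index_of :: "'a list \<Rightarrow> 'a \<Rightarrow> nat" where
  "index_of xs x = length (takeWhile (\<lambda>y. y \<noteq> x) xs)"

lemma index_of_Nil [simp]: "index_of [] x = 0"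
  by (simp add: index_of_def)

lemma index_of_Cons [simp]: "index_of (y # ys) x = (if y = x then 0 else Suc (index_of ys x))"
  by (simp add: index_of_def)

lemma index_of_append: "x \<notin> set xs \<Longrightarrow> index_of (xs @ x # ys) x = length xs"
  by (induction xs) auto

lemma index_of_nth: "x \<in> set xs \<Longrightarrow> index_of xs x < length xs \<and> xs ! index_of xs x = x"
  by (induction xs) auto

lemma index_of_map: "inj f \<Longrightarrow> index_of (map f xs) (f x) = index_of xs x"
  by (induction xs) (auto simp: inj_eq)

lemma index_of_remove1:
  assumes "distinct xs" "a \<in> set xs" "x \<in> set xs" "a \<noteq> x"
  shows "index_of (remove1 a xs) x =
           (if index_of xs a < index_of xs x then index_of xs x - 1 else index_of xs x)
         \<and> index_of xs a \<noteq> index_of xs x"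
  using assms by (induction xs) auto

lemma remove1_map: "inj f \<Longrightarrow> remove1 (f x) (map f xs) = map f (remove1 x xs)"
  by (induction xs) (auto simp: inj_eq)

text \<open>\<open>order_sign xs ys\<close> computes \<open>sign (list_perm xs ys)\<close> by moving the entries of \<open>xs\<close> to
  the front of \<open>ys\<close> one at a time.\<close>
fun order_sign :: "'a list \<Rightarrow> 'a list \<Rightarrow> int" where
  "order_sign [] ys = 1"
| "order_sign (x # xs) ys = (-1) ^ index_of ys x * order_sign xs (remove1 x ys)"

lemma order_sign_cases: "order_sign xs ys = 1 \<or> order_sign xs ys = -1"
  by (induction xs arbitrary: ys) (auto simp: minus_one_power_iff)

lemma order_sign_refl [simp]: "order_sign xs xs = 1"
  by (induction xs) auto

lemma order_sign_map: "inj f \<Longrightarrow> order_sign (map f xs) (map f ys) = order_sign xs ys"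
  by (induction xs arbitrary: ys) (auto simp: index_of_map remove1_map)

lemma list_perm_nth:
  assumes "distinct xs" "length xs = length ys" "k < length xs"
  shows "list_perm xs ys (xs ! k) = ys ! k"
  using assms map_of_zip_nth[of xs ys k] by (simp add: list_perm_def)

lemma list_perm_notin:
  assumes "length xs = length ys" "x \<notin> set xs"
  shows "list_perm xs ys x = x"
proof -
  have "map_of (zip xs ys) x = None" using assms by simp
  then show ?thesis by (simp add: list_perm_def)
qed

lemma list_perm_permutes:
  assumes "distinct xs" "distinct ys" "set xs = set ys"
  shows "list_perm xs ys permutes set xs"
proof -
  have "length xs = length ys" using assms distinct_card by metis
  then have "list_permutes (zip xs ys) (set xs)" "list_perm xs ys = permutation_of_list (zip xs ys)"
    using assms by (auto simp: list_perm_def permutation_of_list_def fun_eq_iff split: option.split)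
  then show ?thesis by simp
qed

lemma list_perm_permutation:
  "distinct xs \<Longrightarrow> distinct ys \<Longrightarrow> set xs = set ys \<Longrightarrow> permutation (list_perm xs ys)"
  using list_perm_permutes permutes_imp_permutation by blast

lemma list_perm_Cons_Cons:
  assumes "x \<notin> set xs" "length xs = length ys"
  shows "list_perm (x # xs) (x # ys) = list_perm xs ys"
proof
  fix z show "list_perm (x # xs) (x # ys) z = list_perm xs ys z"
    using list_perm_notin[of xs ys x] assms by (cases "z = x") (simp_all add: list_perm_def)
qed

lemma list_perm_map_transpose:
  assumes "distinct xs" "length xs = length ys" "set xs = set ys" "a \<in> set ys" "b \<in> set ys"
  shows "list_perm xs (map (transpose a b) ys) = transpose a b \<circ> list_perm xs ys"
proof
  fix z show "list_perm xs (map (transpose a b) ys) z = (transpose a b \<circ> list_perm xs ys) z"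
  proof (cases "z \<in> set xs")
    case True
    then obtain k where "k < length xs" "z = xs ! k" by (metis in_set_conv_nth)
    then show ?thesis
      using list_perm_nth[OF assms(1), of "map (transpose a b) ys" k]
        list_perm_nth[OF assms(1,2), of k] assms(2) by simp
  next
    case False
    then have "list_perm xs ys z = z" "list_perm xs (map (transpose a b) ys) z = z"
      using list_perm_notin[of xs ys z] list_perm_notin[of xs "map (transpose a b) ys" z] False assms(2)
      by auto
    then show ?thesis using False assms by (auto simp: transpose_def)
  qed
qed

text \<open>Moving an entry \<open>x\<close> of the target list left past \<open>as\<close> is a product of \<open>length as\<close>
  transpositions.\<close>
lemma sign_list_perm_move_left:
  assumes "distinct (ps @ as @ x # bs)" "distinct zs" "set zs = set (ps @ as @ x # bs)"
  shows "sign (list_perm zs (ps @ as @ x # bs)) = (-1) ^ length as * sign (list_perm zs (ps @ x # as @ bs))"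
  using assms
proof (induction as arbitrary: bs rule: rev_induct)
  case (snoc a as bs)
  let ?ys = "ps @ as @ x # a # bs"
  have d: "distinct ?ys" and ax: "a \<noteq> x" using snoc.prems(1) by auto
  have swap: "ps @ (as @ [a]) @ x # bs = map (transpose a x) ?ys"
    using snoc.prems(1) by (auto simp: transpose_def intro!: map_idI[symmetric])
  have s: "set zs = set ?ys" using snoc.prems(3) by auto
  have "length zs = length ?ys" using s d snoc.prems(2) distinct_card by metis
  then have "list_perm zs (map (transpose a x) ?ys) = transpose a x \<circ> list_perm zs ?ys"
    using list_perm_map_transpose[of zs ?ys a x] snoc.prems(2) s by simp
  then have "sign (list_perm zs (ps @ (as @ [a]) @ x # bs)) = - sign (list_perm zs ?ys)"
    using sign_compose[OF permutation_swap_id list_perm_permutation[OF snoc.prems(2) d s]]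
      sign_swap_id[of a x] ax swap by simp
  also have "sign (list_perm zs ?ys) = (-1) ^ length as * sign (list_perm zs (ps @ x # as @ a # bs))"
    using snoc.IH[of "a # bs"] d snoc.prems(2) s by simp
  finally show ?case by simp
qed simp

lemma sign_list_perm:
  assumes "distinct xs" "distinct ys" "set xs = set ys"
  shows "sign (list_perm xs ys) = order_sign xs ys"
  using assms
proof (induction xs arbitrary: ys)
  case Nil
  then have "list_perm [] ys = id" by (auto simp: list_perm_def)
  then show ?case by simp
next
  case (Cons x xs ys)
  then obtain as bs where ys: "ys = as @ x # bs" by (metis list.set_intros(1) split_list)
  have x: "x \<notin> set as" "x \<notin> set bs" "x \<notin> set xs" using Cons.prems ys by auto
  have dab: "distinct (as @ bs)" using Cons.prems(2) ys by simp
  have "insert x (set xs) = insert x (set (as @ bs))" using Cons.prems(3) ys by auto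
  then have sab: "set xs = set (as @ bs)" using x by (metis Un_iff insert_ident set_append)
  have len: "length xs = length (as @ bs)"
    using distinct_card[of xs] distinct_card[of "as @ bs"] sab dab Cons.prems(1) by simp
  have "sign (list_perm (x # xs) ys) = (-1) ^ length as * sign (list_perm (x # xs) (x # as @ bs))"
    using sign_list_perm_move_left[of "[]" as x bs "x # xs"] Cons.prems ys by simp
  also have "list_perm (x # xs) (x # as @ bs) = list_perm xs (as @ bs)"
    by (rule list_perm_Cons_Cons) (use x len in auto)
  also have "sign (list_perm xs (as @ bs)) = order_sign xs (as @ bs)"
    using Cons.IH Cons.prems(1) dab sab by simp
  finally show ?case using ys x index_of_append[of x as bs] by (simp add: remove1_append)
qed

lemma order_sign_trans:
  assumes "distinct xs" "distinct ys" "distinct zs" "set xs = set ys" "set ys = set zs"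
  shows "order_sign xs zs = order_sign xs ys * order_sign ys zs"
proof -
  have len: "length xs = length ys" "length ys = length zs" using assms distinct_card by metis+
  have "list_perm xs zs = list_perm ys zs \<circ> list_perm xs ys"
  proof
    fix z show "list_perm xs zs z = (list_perm ys zs \<circ> list_perm xs ys) z"
    proof (cases "z \<in> set xs")
      case True
      then obtain k where "k < length xs" "z = xs ! k" by (metis in_set_conv_nth)
      then show ?thesis using list_perm_nth[OF assms(1)] list_perm_nth[OF assms(2)] len by simp
    next
      case False
      then show ?thesis using list_perm_notin len assms by (metis comp_apply)
    qed
  qed
  then have "sign (list_perm xs zs) = sign (list_perm ys zs) * sign (list_perm xs ys)"
    using sign_compose[OF list_perm_permutation[of ys zs] list_perm_permutation[of xs ys]] assms by simp
  then show ?thesis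
    using sign_list_perm[of xs zs] sign_list_perm[of ys zs] sign_list_perm[of xs ys] assms
    by (simp add: mult.commute)
qed

lemma order_sign_sym:
  assumes "distinct xs" "distinct ys" "set xs = set ys"
  shows "order_sign ys xs = order_sign xs ys"
proof -
  have "order_sign xs xs = order_sign xs ys * order_sign ys xs"
    using order_sign_trans[OF assms(1,2,1,3) assms(3)[symmetric]] .
  then have "order_sign xs ys * order_sign ys xs = 1" by simp
  then show ?thesis using order_sign_cases[of xs ys] by auto
qed

lemma order_sign_remove1:
  assumes "distinct xs" "distinct ys" "set xs = set ys" "x \<in> set xs"
  shows "order_sign xs ys =
           (-1) ^ (index_of xs x + index_of ys x) * order_sign (remove1 x xs) (remove1 x ys)"
  using assms
proof (induction xs arbitrary: ys)
  case (Cons a xs ys)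
  show ?case
  proof (cases "a = x")
    case False
    have x: "x \<in> set xs" and a: "a \<in> set ys" "x \<in> set ys" using Cons.prems False by auto
    have IH: "order_sign xs (remove1 a ys) = (-1) ^ (index_of xs x + index_of (remove1 a ys) x) *
                order_sign (remove1 x xs) (remove1 x (remove1 a ys))"
      using Cons.IH[of "remove1 a ys"] Cons.prems x by (auto simp: set_remove1_eq)
    have signs: "(-1::int) ^ index_of ys a * (-1) ^ (index_of xs x + index_of (remove1 a ys) x) =
          (-1) ^ (index_of (a # xs) x + index_of ys x) * (-1) ^ index_of (remove1 x ys) a"
      using index_of_remove1[of ys x a] index_of_remove1[of ys a x] Cons.prems(2) a False
      by (auto simp: minus_one_power_iff)
    have "order_sign (a # xs) ys = (-1) ^ index_of ys a * order_sign xs (remove1 a ys)" by simp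
    also have "\<dots> = (-1) ^ (index_of (a # xs) x + index_of ys x) *
        ((-1) ^ index_of (remove1 x ys) a * order_sign (remove1 x xs) (remove1 a (remove1 x ys)))"
      unfolding IH mult.assoc[symmetric] signs by (simp add: remove1_commute)
    also have "(-1) ^ index_of (remove1 x ys) a * order_sign (remove1 x xs) (remove1 a (remove1 x ys))
        = order_sign (remove1 x (a # xs)) (remove1 x ys)"
      using False by simp
    finally show ?thesis .
  qed simp
qed simp

lemma incidence_sign_eq_order_sign:
  assumes "distinct (ori Fb)" "set (ori Fb) = Fb" "distinct (ori F)" "set (ori F) = F"
    and "Fb = insert x F" "x \<notin> F"
  shows "incidence_sign ori F Fb = (-1) ^ index_of (ori Fb) x * order_sign (remove1 x (ori Fb)) (ori F)"
proof -
  let ?L = "ori Fb" and ?j = "index_of (ori Fb) x"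
  have x: "x \<in> set ?L" using assms by auto
  have j: "(THE j. j < length ?L \<and> ?L ! j \<notin> F) = ?j"
  proof (rule the_equality)
    show "?j < length ?L \<and> ?L ! ?j \<notin> F" using index_of_nth[OF x] assms by simp
    fix j assume j: "j < length ?L \<and> ?L ! j \<notin> F"
    then have "?L ! j = x" using assms nth_mem by blast
    then show "j = ?j" using j index_of_nth[OF x] assms(1) nth_eq_iff_index_eq by metis
  qed
  have "take ?j ?L = takeWhile (\<lambda>y. y \<noteq> x) ?L"
    unfolding index_of_def by (rule takeWhile_eq_take[symmetric])
  then have "x \<notin> set (take ?j ?L)" by (metis (full_types) set_takeWhileD)
  moreover have "?L = take ?j ?L @ x # drop (Suc ?j) ?L"
    using id_take_nth_drop index_of_nth[OF x] by metis
  ultimately have "take ?j ?L @ drop (Suc ?j) ?L = remove1 x ?L"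
    by (metis remove1_append remove1.simps(2))
  moreover have "sign (list_perm (remove1 x ?L) (ori F)) = order_sign (remove1 x ?L) (ori F)"
    by (rule sign_list_perm) (use assms in auto)
  ultimately show ?thesis unfolding incidence_sign_def Let_def j by simp
qed

lemma incidence_sign_image:
  assumes f: "inj f" and Y: "Y = insert x X" "x \<notin> X"
    and ori: "distinct (ori X)" "set (ori X) = X" "distinct (ori Y)" "set (ori Y) = Y"
    and orj: "distinct (orj (f ` X))" "set (orj (f ` X)) = f ` X"
             "distinct (orj (f ` Y))" "set (orj (f ` Y)) = f ` Y"
  shows "incidence_sign orj (f ` X) (f ` Y) =
     order_sign (orj (f ` X)) (map f (ori X)) * order_sign (orj (f ` Y)) (map f (ori Y)) *
     incidence_sign ori X Y"
proof -
  have fY: "f ` Y = insert (f x) (f ` X)" "f x \<notin> f ` X" using Y f by (auto simp: inj_def)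
  define A where "A = orj (f ` Y)"
  define B where "B = map f (ori Y)"
  define C where "C = map f (ori X)"
  define D where "D = orj (f ` X)"
  have ABCD: "distinct A" "set A = f ` Y" "distinct B" "set B = f ` Y"
    "distinct C" "set C = f ` X" "distinct D" "set D = f ` X"
    unfolding A_def B_def C_def D_def using ori orj f by (auto simp: distinct_map inj_on_def inj_def)
  have rem: "distinct (remove1 (f x) A)" "set (remove1 (f x) A) = f ` X"
    "distinct (remove1 (f x) B)" "set (remove1 (f x) B) = f ` X"
    using ABCD fY by auto
  have sq: "(-1::int) ^ n * (-1) ^ n = 1" for n
    by (simp add: power_add[symmetric] minus_one_power_iff)
  have "incidence_sign orj (f ` X) (f ` Y) = (-1) ^ index_of A (f x) * order_sign (remove1 (f x) A) D"
    unfolding A_def D_def by (rule incidence_sign_eq_order_sign[OF orj(3,4,1,2) fY])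
  also have "order_sign (remove1 (f x) A) D =
      order_sign (remove1 (f x) A) (remove1 (f x) B) * order_sign (remove1 (f x) B) C * order_sign C D"
    using order_sign_trans[of "remove1 (f x) A" "remove1 (f x) B" D]
      order_sign_trans[of "remove1 (f x) B" C D] rem ABCD by (simp add: mult.assoc)
  also have "order_sign (remove1 (f x) A) (remove1 (f x) B) =
      (-1) ^ (index_of A (f x) + index_of B (f x)) * order_sign A B"
    using order_sign_remove1[of A B "f x"] ABCD fY sq by (simp add: mult.assoc[symmetric])
  also have "index_of B (f x) = index_of (ori Y) x"
    unfolding B_def by (rule index_of_map[OF f])
  also have "order_sign (remove1 (f x) B) C = order_sign (remove1 x (ori Y)) (ori X)"
    unfolding B_def C_def remove1_map[OF f] by (rule order_sign_map[OF f])
  also have "order_sign C D = order_sign D C" using order_sign_sym[of D C] ABCD by simp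
  finally have "incidence_sign orj (f ` X) (f ` Y) = ((-1) ^ index_of A (f x) * (-1) ^ index_of A (f x)) *
      ((-1) ^ index_of (ori Y) x * order_sign (remove1 x (ori Y)) (ori X)) * order_sign A B * order_sign D C"
    by (simp only: power_add mult_ac)
  then show ?thesis
    unfolding sq incidence_sign_eq_order_sign[OF ori(3,4,1,2) Y, symmetric] A_def B_def C_def D_def
    by (simp only: mult_ac mult_1)
qed

section \<open>Signed walks\<close>

fun walk_sign :: "('a \<Rightarrow> 'a \<Rightarrow> int) \<Rightarrow> 'a list \<Rightarrow> int" where
  "walk_sign s (x # y # w) = s x y * walk_sign s (y # w)"
| "walk_sign s _ = 1"

lemma walk_sign_append:
  "xs \<noteq> [] \<Longrightarrow> ys \<noteq> [] \<Longrightarrow> walk_sign s (xs @ ys) = walk_sign s xs * s (last xs) (hd ys) * walk_sign s ys"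
proof (induction xs)
  case (Cons x xs)
  then show ?case by (cases xs; cases ys) (auto simp: mult.assoc)
qed simp

lemma walk_sign_cases:
  assumes "\<And>x y. s x y = 1 \<or> s x y = -1"
  shows "walk_sign s w = 1 \<or> walk_sign s w = -1"
proof (induction w rule: induct_list012)
  case (3 x y w)
  then show ?case using assms[of x y] by auto
qed simp_all

lemma walk_sign_rev:
  assumes "\<And>x y. A x y \<Longrightarrow> s x y = s y x" and "successively A w"
  shows "walk_sign s (rev w) = walk_sign s w"
  using assms(2)
proof (induction w rule: induct_list012)
  case (3 x y w)
  then have "walk_sign s (rev (y # w)) = walk_sign s (y # w)" "A x y" by simp_all
  moreover from assms(1)[OF \<open>A x y\<close>] have "s y x = s x y" by simp
  ultimately show ?case using walk_sign_append[of "rev (y # w)" "[x]" s] by (simp add: last_rev)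
qed simp_all

lemma walk_sign_map: "walk_sign s (map f w) = walk_sign (\<lambda>x y. s (f x) (f y)) w"
  by (induction w rule: induct_list012) simp_all

lemma walk_sign_switch:
  assumes "\<And>x y. A x y \<Longrightarrow> t x y = e x * e y * s x y" and "\<And>x. e x = 1 \<or> e x = -1"
    and "successively A w" "w \<noteq> []"
  shows "walk_sign t w = e (hd w) * e (last w) * walk_sign s w"
  using assms(3,4)
proof (induction w rule: induct_list012)
  case (2 x)
  then show ?case using assms(2)[of x] by auto
next
  case (3 x y w)
  then have "walk_sign t (y # w) = e y * e (last (y # w)) * walk_sign s (y # w)" "A x y" by simp_all
  then show ?case using assms(1)[of x y] assms(2)[of y] by (auto simp: algebra_simps)
qed simp

lemma walk_sign_one [simp]: "walk_sign (\<lambda>_ _. 1) w = 1"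
  by (induction w rule: induct_list012) simp_all

lemma nth_append_hd_Suc:
  assumes "k < length cs"
  shows "(cs @ [hd cs]) ! Suc k = cs ! ((k + 1) mod length cs)"
proof (cases "Suc k < length cs")
  case False
  then have "Suc k = length cs" "cs \<noteq> []" using assms by auto
  then show ?thesis by (simp add: nth_append hd_conv_nth)
qed (simp add: nth_append)

lemma walk_sign_closed_conv_prod:
  assumes "cs \<noteq> []"
  shows "walk_sign s (cs @ [hd cs]) = (\<Prod>k<length cs. s (cs ! k) (cs ! ((k + 1) mod length cs)))"
proof -
  have "walk_sign s xs = (\<Prod>k<length xs - 1. s (xs ! k) (xs ! Suc k))" for xs
    by (induction s xs rule: walk_sign.induct)
      (simp_all add: prod.lessThan_Suc_shift del: prod.lessThan_Suc)
  then have "walk_sign s (cs @ [hd cs]) = (\<Prod>k<length cs. s ((cs @ [hd cs]) ! k) ((cs @ [hd cs]) ! Suc k))"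
    by simp
  also have "\<dots> = (\<Prod>k<length cs. s (cs ! k) (cs ! ((k + 1) mod length cs)))"
    by (rule prod.cong) (simp_all only: lessThan_iff nth_append_left nth_append_hd_Suc)
  finally show ?thesis .
qed

lemma successively_closed_iff:
  assumes "cs \<noteq> []"
  shows "successively A (cs @ [hd cs]) \<longleftrightarrow> (\<forall>k<length cs. A (cs ! k) (cs ! ((k + 1) mod length cs)))"
proof -
  have "successively A (cs @ [hd cs]) \<longleftrightarrow>
      (\<forall>k<length cs. A ((cs @ [hd cs]) ! k) ((cs @ [hd cs]) ! Suc k))"
    by (simp add: successively_conv_nth)
  also have "\<dots> \<longleftrightarrow> (\<forall>k<length cs. A (cs ! k) (cs ! ((k + 1) mod length cs)))"
    by (simp only: nth_append_left nth_append_hd_Suc cong: all_cong imp_cong)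
  finally show ?thesis .
qed

lemma walk_sign_append_at:
  "walk_sign s (xs @ y # zs) = walk_sign s (xs @ [y]) * walk_sign s (y # zs)"
  using walk_sign_append[of "xs @ [y]" zs s] by (cases zs) auto

lemma walk_sign_split_loop:
  "walk_sign s (xs @ y # ys @ y # zs) = walk_sign s (xs @ y # zs) * walk_sign s (y # ys @ [y])"
  using walk_sign_append_at[of s xs y "ys @ y # zs"] walk_sign_append_at[of s "y # ys" y zs]
    walk_sign_append_at[of s xs y zs] by simp

lemma short_closed_walk_sign:
  assumes irrefl: "\<And>x. \<not> A x x" and sym_sign: "\<And>x y. A x y \<Longrightarrow> s x y = s y x"
    and sign: "\<And>x y. s x y = 1 \<or> s x y = -1"
    and "successively A (cs @ [hd cs])" "cs \<noteq> []" "length cs < 3"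
  shows "walk_sign s (cs @ [hd cs]) = 1"
proof -
  consider x where "cs = [x]" | x y where "cs = [x, y]"
    using assms(5,6) by (cases cs; cases "tl cs"; cases "tl (tl cs)") auto
  then show ?thesis
  proof cases
    case (1 x)
    then show ?thesis using assms(4) irrefl by simp
  next
    case (2 x y)
    then show ?thesis using assms(4) sym_sign sign[of x y] by auto
  qed
qed

text \<open>Harary: if all cycles are positive, so are all closed walks, since a closed walk that
  revisits a vertex splits into two shorter closed walks.\<close>
lemma closed_walk_sign_eq_one:
  assumes irrefl: "\<And>x. \<not> A x x" and sym_sign: "\<And>x y. A x y \<Longrightarrow> s x y = s y x"
    and sign: "\<And>x y. s x y = 1 \<or> s x y = -1"
    and cycles: "\<And>cs. 3 \<le> length cs \<Longrightarrow> distinct cs \<Longrightarrow> successively A (cs @ [hd cs]) \<Longrightarrow>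
      walk_sign s (cs @ [hd cs]) = 1"
    and "successively A w" "w \<noteq> []" "hd w = last w"
  shows "walk_sign s w = 1"
  using assms(5-)
proof (induction "length w" arbitrary: w rule: less_induct)
  case less
  show ?case
  proof (cases "length w = 1")
    case True
    then obtain x where "w = [x]" by (metis One_nat_def length_0_conv length_Suc_conv)
    then show ?thesis by simp
  next
    case False
    define cs where "cs = butlast w"
    have "cs \<noteq> []" using False less.prems(2) by (auto simp: cs_def butlast_conv_take le_Suc_eq)
    moreover have "w = cs @ [hd cs]"
      using less.prems(2,3) \<open>cs \<noteq> []\<close> unfolding cs_def
      by (metis append_butlast_last_id hd_append2)
    ultimately have w: "w = cs @ [hd cs]" "cs \<noteq> []" by auto
    show ?thesis
    proof (cases "distinct cs")
      case True
      show ?thesis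
      proof (cases "3 \<le> length cs")
        case False
        then show ?thesis
          using short_closed_walk_sign[of A s cs, OF irrefl sym_sign sign] less.prems(1) w by simp
      qed (use cycles True less.prems(1) w in simp)
    next
      case False
      then obtain xs y ys zs where cs: "cs = xs @ [y] @ ys @ [y] @ zs"
        using not_distinct_decomp by blast
      let ?w1 = "xs @ y # zs @ [hd cs]" and ?w2 = "y # ys @ [y]"
      have w_eq: "w = xs @ y # ys @ y # zs @ [hd cs]" using w(1) cs by simp
      have "successively A (xs @ [y] @ ys @ [y] @ zs @ [hd cs])" using less.prems(1) w_eq by simp
      then have "successively A (xs @ [y])" "successively A ?w2" "successively A (y # zs @ [hd cs])"
        by (auto simp: successively_append_iff successively_Cons hd_append)
      then have "successively A ?w1" "successively A ?w2"
        by (auto simp: successively_append_iff successively_Cons)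
      moreover have "hd ?w1 = hd cs" by (simp add: cs hd_append)
      ultimately have "walk_sign s ?w1 = 1" "walk_sign s ?w2 = 1"
        using less.hyps[of ?w1] less.hyps[of ?w2] unfolding w_eq by auto
      then show ?thesis unfolding w_eq walk_sign_split_loop by simp
    qed
  qed
qed

lemma potential_if_closed_walks_positive:
  assumes sym: "\<And>x y. A x y \<Longrightarrow> A y x" and sym_sign: "\<And>x y. A x y \<Longrightarrow> s x y = s y x"
    and sign: "\<And>x y. s x y = 1 \<or> s x y = -1"
    and closed: "\<And>w. successively A w \<Longrightarrow> w \<noteq> [] \<Longrightarrow> hd w = last w \<Longrightarrow> walk_sign s w = 1"
    and edges: "\<And>x y. A x y \<Longrightarrow> x \<in> V \<and> y \<in> V"
    and conn: "\<And>x. x \<in> V \<Longrightarrow> \<exists>w. w \<noteq> [] \<and> hd w = r \<and> last w = x \<and> successively A w"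
  shows "\<exists>\<phi>. (\<forall>x. \<phi> x = 1 \<or> \<phi> x = -1) \<and> (\<forall>x y. A x y \<longrightarrow> s x y = \<phi> x * \<phi> y)"
proof -
  define W where "W x = (SOME w. w \<noteq> [] \<and> hd w = r \<and> last w = x \<and> successively A w)" for x
  have W: "W x \<noteq> [] \<and> hd (W x) = r \<and> last (W x) = x \<and> successively A (W x)" if "x \<in> V" for x
    unfolding W_def by (rule someI_ex) (use conn that in blast)
  have sign_W: "walk_sign s (W x) = 1 \<or> walk_sign s (W x) = -1" for x
    by (rule walk_sign_cases[OF sign])
  have "s x y = walk_sign s (W x) * walk_sign s (W y)" if "A x y" for x y
  proof -
    have Wx: "W x \<noteq> []" "hd (W x) = r" "last (W x) = x" "successively A (W x)"
      and Wy: "W y \<noteq> []" "hd (W y) = r" "last (W y) = y" "successively A (W y)"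
      using W edges[OF that] by auto
    have "successively A (rev (W y))"
      using successively_mono[OF Wy(4), of "\<lambda>x y. A y x"] sym by simp
    then have "successively A (W x @ rev (W y))"
      using Wx Wy that by (simp add: successively_append_iff hd_rev)
    then have "walk_sign s (W x @ rev (W y)) = 1"
      using closed Wx Wy by (simp add: hd_rev last_rev)
    moreover have "walk_sign s (W x @ rev (W y)) = walk_sign s (W x) * s x y * walk_sign s (W y)"
      using walk_sign_append[of "W x" "rev (W y)" s] walk_sign_rev[OF sym_sign Wy(4)] Wx Wy
      by (simp add: hd_rev)
    ultimately show ?thesis using sign_W[of x] sign_W[of y] sign[of x y] by auto
  qed
  with sign_W show ?thesis by (intro exI[of _ "\<lambda>x. walk_sign s (W x)"]) auto
qed

section \<open>Balance of \<open>B\<^sub>i\<close> via potentials\<close>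

definition B_potential :: "'a set set \<Rightarrow> nat \<Rightarrow> ('a set \<Rightarrow> 'a list) \<Rightarrow> ('a set \<Rightarrow> int) \<Rightarrow> bool" where
  "B_potential K i ori \<phi> \<longleftrightarrow>
     (\<forall>X. \<phi> X = 1 \<or> \<phi> X = -1) \<and> (\<forall>X Y. B_adj K i X Y \<longrightarrow> B_sign ori X Y = \<phi> X * \<phi> Y)"

lemma B_adj_sym: "B_adj K i X Y \<Longrightarrow> B_adj K i Y X"
  by (auto simp: B_adj_def)

lemma B_adj_irrefl: "\<not> B_adj K i X X"
  by (auto simp: B_adj_def faces_of_dim_def)

lemma B_adj_B_verts: "B_adj K i X Y \<Longrightarrow> X \<in> B_verts K i \<and> Y \<in> B_verts K i"
  by (auto simp: B_adj_def B_verts_def)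

lemma B_sign_cases: "B_sign ori X Y = 1 \<or> B_sign ori X Y = -1"
  by (auto simp: B_sign_def incidence_sign_def Let_def minus_one_power_iff sign_def)

lemma B_sign_commute: "B_adj K i X Y \<Longrightarrow> B_sign ori X Y = B_sign ori Y X"
  using B_adj_irrefl[of K i X] by (auto simp: B_adj_def B_sign_def)

lemma B_cycle_iff:
  "B_cycle K i cs \<longleftrightarrow> 3 \<le> length cs \<and> distinct cs \<and> successively (B_adj K i) (cs @ [hd cs])"
proof (cases "cs = []")
  case False
  have "set cs \<subseteq> B_verts K i"
    if "\<forall>k<length cs. B_adj K i (cs ! k) (cs ! ((k + 1) mod length cs))"
    using that B_adj_B_verts by (metis in_set_conv_nth subsetI)
  then show ?thesis using successively_closed_iff[OF False] unfolding B_cycle_def by blast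
qed (simp add: B_cycle_def)

lemma B_balanced_iff_closed_walks:
  "B_balanced K i ori \<longleftrightarrow> (\<forall>cs. B_cycle K i cs \<longrightarrow> walk_sign (B_sign ori) (cs @ [hd cs]) = 1)"
proof -
  have "cs \<noteq> []" if "B_cycle K i cs" for cs using that by (auto simp: B_cycle_def)
  then show ?thesis unfolding B_balanced_def by (auto simp: walk_sign_closed_conv_prod)
qed

lemma B_balanced_if_potential:
  assumes "B_potential K i ori \<phi>"
  shows "B_balanced K i ori"
  unfolding B_balanced_iff_closed_walks
proof (intro allI impI)
  fix cs assume "B_cycle K i cs"
  then have w: "successively (B_adj K i) (cs @ [hd cs])" "cs @ [hd cs] \<noteq> []"
    by (simp_all add: B_cycle_iff)
  have \<phi>: "\<And>X. \<phi> X = 1 \<or> \<phi> X = -1" "\<And>X Y. B_adj K i X Y \<Longrightarrow> B_sign ori X Y = \<phi> X * \<phi> Y * 1"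
    using assms by (simp_all add: B_potential_def)
  have "walk_sign (B_sign ori) (cs @ [hd cs]) =
      \<phi> (hd (cs @ [hd cs])) * \<phi> (last (cs @ [hd cs])) * walk_sign (\<lambda>_ _. 1) (cs @ [hd cs])"
    by (rule walk_sign_switch[OF \<phi>(2) \<phi>(1) w])
  also have "\<dots> = \<phi> (hd cs) * \<phi> (hd cs)"
    using \<open>B_cycle K i cs\<close> by (auto simp: B_cycle_def hd_append)
  also have "\<dots> = 1" using \<phi>(1)[of "hd cs"] by auto
  finally show "walk_sign (B_sign ori) (cs @ [hd cs]) = 1" .
qed

lemma B_potential_if_balanced:
  assumes conn: "B_connected K i" and bal: "B_balanced K i ori"
  shows "\<exists>\<phi>. B_potential K i ori \<phi>"
proof -
  obtain r where r: "r \<in> B_verts K i" using conn unfolding B_connected_def by blast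
  have closed: "walk_sign (B_sign ori) w = 1"
    if "successively (B_adj K i) w" "w \<noteq> []" "hd w = last w" for w
  proof (rule closed_walk_sign_eq_one[OF B_adj_irrefl B_sign_commute B_sign_cases _ that])
    fix cs assume "3 \<le> length cs" "distinct cs" "successively (B_adj K i) (cs @ [hd cs])"
    then show "walk_sign (B_sign ori) (cs @ [hd cs]) = 1"
      using bal by (simp add: B_balanced_iff_closed_walks B_cycle_iff)
  qed
  have conn': "\<exists>w. w \<noteq> [] \<and> hd w = r \<and> last w = X \<and> successively (B_adj K i) w"
    if "X \<in> B_verts K i" for X
    using conn r that unfolding B_connected_def successively_conv_nth by blast
  have "\<exists>\<phi>. (\<forall>X. \<phi> X = 1 \<or> \<phi> X = -1) \<and> (\<forall>X Y. B_adj K i X Y \<longrightarrow> B_sign ori X Y = \<phi> X * \<phi> Y)"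
    by (rule potential_if_closed_walks_positive[of "B_adj K i" "B_sign ori" "B_verts K i" r])
      (fact B_adj_sym B_sign_commute B_sign_cases closed B_adj_B_verts conn')+
  then show ?thesis unfolding B_potential_def .
qed

lemma B_balanced_iff_potential:
  "B_connected K i \<Longrightarrow> B_balanced K i ori \<longleftrightarrow> (\<exists>\<phi>. B_potential K i ori \<phi>)"
  using B_balanced_if_potential B_potential_if_balanced by blast

lemma B_potentialI:
  assumes "\<And>X. \<phi> X = 1 \<or> \<phi> X = -1"
    and "\<And>X Y. X \<in> faces_of_dim K i \<Longrightarrow> Y \<in> faces_of_dim K (i + 1) \<Longrightarrow> X \<subseteq> Y \<Longrightarrow>
      B_sign ori X Y = \<phi> X * \<phi> Y"
  shows "B_potential K i ori \<phi>"
  unfolding B_potential_def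
proof (intro conjI allI impI)
  fix X Y assume adj: "B_adj K i X Y"
  then show "B_sign ori X Y = \<phi> X * \<phi> Y"
    using assms(2)[of X Y] assms(2)[of Y X] B_sign_commute[OF adj]
    by (auto simp: B_adj_def mult.commute)
qed (use assms(1) in blast)

section \<open>Face embeddings\<close>

definition orientation_sign :: "('a set \<Rightarrow> 'a list) \<Rightarrow> ('b set \<Rightarrow> 'b list) \<Rightarrow> ('a \<Rightarrow> 'b) \<Rightarrow> 'a set \<Rightarrow> int" where
  "orientation_sign ori orj f X = order_sign (orj (f ` X)) (map f (ori X))"

lemma orientation_sign_cases: "orientation_sign ori orj f X = 1 \<or> orientation_sign ori orj f X = -1"
  by (simp add: orientation_sign_def order_sign_cases)

lemma orientationD: "orientation K ori \<Longrightarrow> X \<in> K \<Longrightarrow> distinct (ori X) \<and> set (ori X) = X"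
  by (simp add: orientation_def)

lemma B_adj_image:
  assumes "inj f" "\<forall>Z\<in>Kc. f ` Z \<in> K" "B_adj Kc i X Y"
  shows "B_adj K i (f ` X) (f ` Y)"
proof -
  have "card (f ` Z) = card Z" for Z using assms(1) by (simp add: card_image inj_on_subset)
  then show ?thesis using assms(2,3) unfolding B_adj_def faces_of_dim_def by (auto simp: image_mono)
qed

lemma B_sign_image:
  assumes f: "inj f" and ori: "orientation Kc ori" and orj: "orientation K orj"
    and emb: "\<forall>Z\<in>Kc. f ` Z \<in> K" and adj: "B_adj Kc i X Y"
  shows "B_sign orj (f ` X) (f ` Y) =
    orientation_sign ori orj f X * orientation_sign ori orj f Y * B_sign ori X Y"
proof -
  have facet: "B_sign orj (f ` X) (f ` Y) =
      orientation_sign ori orj f X * orientation_sign ori orj f Y * B_sign ori X Y"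
    if "X \<in> faces_of_dim Kc i" "Y \<in> faces_of_dim Kc (i + 1)" "X \<subseteq> Y" for X Y
  proof -
    have XY: "X \<in> Kc" "Y \<in> Kc" "finite X" "finite Y"
      using that by (auto simp: faces_of_dim_def intro: card_ge_0_finite)
    then have "card (Y - X) = 1" using that card_Diff_subset[of X Y] by (simp add: faces_of_dim_def)
    then obtain x where "Y - X = {x}" by (rule card_1_singletonE)
    then have x: "Y = insert x X" "x \<notin> X" using \<open>X \<subseteq> Y\<close> by auto
    have "incidence_sign orj (f ` X) (f ` Y) =
        orientation_sign ori orj f X * orientation_sign ori orj f Y * incidence_sign ori X Y"
      unfolding orientation_sign_def
      by (rule incidence_sign_image[OF f x])
        (use orientationD[OF ori] orientationD[OF orj] emb XY in auto)
    then show ?thesis using \<open>X \<subseteq> Y\<close> by (simp add: B_sign_def image_mono)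
  qed
  from adj consider "X \<in> faces_of_dim Kc i" "Y \<in> faces_of_dim Kc (i + 1)" "X \<subseteq> Y"
    | "Y \<in> faces_of_dim Kc i" "X \<in> faces_of_dim Kc (i + 1)" "Y \<subseteq> X"
    unfolding B_adj_def by blast
  then show ?thesis
  proof cases
    case 2
    then show ?thesis
      using facet[of Y X] B_sign_commute[OF adj] B_sign_commute[OF B_adj_image[OF f emb adj]]
      by (simp add: mult.commute)
  qed (rule facet)
qed

text \<open>Corresponding edge signs differ by the switching \<open>orientation_sign\<close>, which cancels around
  a cycle.\<close>
lemma B_balanced_reflect_embedding:
  assumes f: "inj f" and ori: "orientation Kc ori" and orj: "orientation K orj"
    and emb: "\<forall>Z\<in>Kc. f ` Z \<in> K" and bal: "B_balanced K i orj"
  shows "B_balanced Kc i ori"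
  unfolding B_balanced_iff_closed_walks
proof (intro allI impI)
  fix cs assume cyc: "B_cycle Kc i cs"
  let ?w = "cs @ [hd cs]"
  have w: "successively (B_adj Kc i) ?w" "?w \<noteq> []" "3 \<le> length cs" "distinct cs"
    using cyc by (simp_all add: B_cycle_iff)
  have "inj_on ((`) f) (set cs)" using f by (simp add: inj_on_def inj_image_eq_iff)
  moreover have "successively (B_adj K i) (map ((`) f) ?w)"
    unfolding successively_map by (rule successively_mono[OF w(1)]) (rule B_adj_image[OF f emb])
  moreover have ne: "cs \<noteq> []" using w(3) by auto
  ultimately have "B_cycle K i (map ((`) f) cs)"
    using w(3,4) unfolding B_cycle_iff by (simp add: distinct_map hd_map)
  then have "walk_sign (B_sign orj) (map ((`) f) cs @ [hd (map ((`) f) cs)]) = 1"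
    using bal by (simp add: B_balanced_iff_closed_walks)
  then have "1 = walk_sign (B_sign orj) (map ((`) f) ?w)" using ne by (simp add: hd_map)
  also have "\<dots> = walk_sign (\<lambda>X Y. B_sign orj (f ` X) (f ` Y)) ?w"
    by (rule walk_sign_map)
  also have "\<dots> = orientation_sign ori orj f (hd ?w) * orientation_sign ori orj f (last ?w) *
      walk_sign (B_sign ori) ?w"
    by (rule walk_sign_switch[OF B_sign_image[OF f ori orj emb] orientation_sign_cases w(1,2)])
  also have "\<dots> = walk_sign (B_sign ori) ?w"
    using orientation_sign_cases[of ori orj f "hd cs"] w(2) by (auto simp: hd_append)
  finally show "walk_sign (B_sign ori) ?w = 1" by simp
qed

definition pushforward_potential ::
    "('a set \<Rightarrow> 'a list) \<Rightarrow> ('b set \<Rightarrow> 'b list) \<Rightarrow> ('a \<Rightarrow> 'b) \<Rightarrow> ('a set \<Rightarrow> int) \<Rightarrow> 'a set \<Rightarrow> int" where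
  "pushforward_potential ori orj f \<phi> X = \<phi> X * orientation_sign ori orj f X"

lemma pushforward_potential_cases:
  assumes "B_potential Kc i ori \<phi>"
  shows "pushforward_potential ori orj f \<phi> X = 1 \<or> pushforward_potential ori orj f \<phi> X = -1"
  using assms orientation_sign_cases[of ori orj f X]
  unfolding pushforward_potential_def B_potential_def by auto

lemma B_sign_image_pushforward_potential:
  assumes "inj f" "orientation Kc ori" "orientation K orj" "\<forall>Z\<in>Kc. f ` Z \<in> K"
    and "B_potential Kc i ori \<phi>" "B_adj Kc i X Y"
  shows "B_sign orj (f ` X) (f ` Y) =
    pushforward_potential ori orj f \<phi> X * pushforward_potential ori orj f \<phi> Y"
  using B_sign_image[OF assms(1-4,6)] assms(5,6)
  by (simp add: B_potential_def pushforward_potential_def mult_ac)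

section \<open>Potentials of \<open>B\<^sub>0\<close> and 2-colourings\<close>

lemma simplicial_complex_subset:
  "simplicial_complex K \<Longrightarrow> G \<in> K \<Longrightarrow> F \<subseteq> G \<Longrightarrow> F \<noteq> {} \<Longrightarrow> F \<in> K"
  unfolding simplicial_complex_def by blast

lemma distinct_set_eq_singleton: "distinct xs \<Longrightarrow> set xs = {a} \<Longrightarrow> xs = [a]"
  by (metis distinct.simps(2) distinct_singleton empty_iff insert_iff list.exhaust
      list.set(1) list.set_intros(1) list.set_intros(2) set_ConsD)

lemma distinct_set_eq_doubleton:
  assumes "distinct xs" "set xs = {a, b}" "a \<noteq> b"
  shows "xs = [a, b] \<or> xs = [b, a]"
proof -
  have "length xs = 2" using distinct_card[OF assms(1)] assms(2,3) by simp
  then obtain p q where "xs = [p, q]" by (metis One_nat_def Suc_1 length_0_conv length_Suc_conv)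
  then show ?thesis using assms(2) by (auto simp: doubleton_eq_iff)
qed

text \<open>The boundary of an oriented edge is the difference of its endpoints.\<close>
lemma B_sign_edge_endpoints:
  assumes sc: "simplicial_complex K" and ori: "orientation K ori" and ab: "{a, b} \<in> K" "a \<noteq> b"
  shows "B_sign ori {a} {a, b} * B_sign ori {b} {a, b} = -1"
proof -
  have K: "{a} \<in> K" "{b} \<in> K" using simplicial_complex_subset[OF sc ab(1)] by auto
  have vertex: "ori {a} = [a]" "ori {b} = [b]"
    using distinct_set_eq_singleton orientationD[OF ori K(1)] orientationD[OF ori K(2)] by auto
  have edge: "distinct (ori {a, b})" "set (ori {a, b}) = {a, b}" using orientationD[OF ori ab(1)] by auto
  have "incidence_sign ori {a} {a, b} = (-1) ^ index_of (ori {a, b}) b * order_sign (remove1 b (ori {a, b})) (ori {a})"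
    by (rule incidence_sign_eq_order_sign) (use edge orientationD[OF ori K(1)] ab(2) in auto)
  moreover have "incidence_sign ori {b} {a, b} = (-1) ^ index_of (ori {a, b}) a * order_sign (remove1 a (ori {a, b})) (ori {b})"
    by (rule incidence_sign_eq_order_sign) (use edge orientationD[OF ori K(2)] ab(2) in auto)
  moreover note distinct_set_eq_doubleton[OF edge ab(2)]
  ultimately show ?thesis using ab(2) unfolding vertex B_sign_def by (elim disjE) simp_all
qed

lemma B0_potential_edge:
  assumes "simplicial_complex K" "orientation K ori" "B_potential K 0 ori \<phi>" "{a, b} \<in> K" "a \<noteq> b"
  shows "\<phi> {a} * \<phi> {b} = -1"
proof -
  have "{a} \<in> K" "{b} \<in> K" using simplicial_complex_subset[OF assms(1,4)] by auto
  then have "B_adj K 0 {a} {a, b}" "B_adj K 0 {b} {a, b}"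
    using assms(4,5) by (auto simp: B_adj_def faces_of_dim_def)
  then have "\<phi> {a} * \<phi> {a, b} * (\<phi> {b} * \<phi> {a, b}) = -1"
    using B_sign_edge_endpoints[OF assms(1,2,4,5)] assms(3) by (simp add: B_potential_def)
  moreover have "\<phi> {a, b} = 1 \<or> \<phi> {a, b} = -1" using assms(3) by (simp add: B_potential_def)
  ultimately show ?thesis by (elim disjE) (simp_all add: mult_ac)
qed

text \<open>The potential gives a vertex its colour and an edge the value forced by its first vertex.\<close>
lemma B0_potential_of_colouring:
  fixes c :: "'a \<Rightarrow> int"
  assumes sc: "simplicial_complex K" and ori: "orientation K ori"
    and c: "\<And>a. c a = 1 \<or> c a = -1" and proper: "\<And>a b. {a, b} \<in> K \<Longrightarrow> a \<noteq> b \<Longrightarrow> c a * c b = -1"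
  shows "\<exists>\<phi>. B_potential K 0 ori \<phi>"
proof -
  define \<phi> where "\<phi> X = (if card X = 1 then c (the_elem X)
      else B_sign ori {hd (ori X)} X * c (hd (ori X)))" for X
  have "B_potential K 0 ori \<phi>"
  proof (rule B_potentialI)
    show "\<phi> X = 1 \<or> \<phi> X = -1" for X
      using c[of "the_elem X"] c[of "hd (ori X)"] B_sign_cases[of ori "{hd (ori X)}" X]
      unfolding \<phi>_def by auto
  next
    fix X Y assume XY: "X \<in> faces_of_dim K 0" "Y \<in> faces_of_dim K (0 + 1)" "X \<subseteq> Y"
    then obtain p where p: "X = {p}" "p \<in> Y" by (auto simp: faces_of_dim_def card_1_singleton_iff)
    have Y: "Y \<in> K" "card Y = 2" using XY by (auto simp: faces_of_dim_def)
    obtain q where q: "q = hd (ori Y)" "q \<in> Y"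
      using orientationD[OF ori Y(1)] Y(2) by (metis card.empty hd_in_set set_empty zero_neq_numeral)
    have \<phi>Y: "\<phi> Y = B_sign ori {q} Y * c q" using Y(2) q(1) by (simp add: \<phi>_def)
    show "B_sign ori X Y = \<phi> X * \<phi> Y"
    proof (cases "q = p")
      case True
      then show ?thesis using \<phi>Y c[of p] unfolding p(1) by (auto simp: \<phi>_def)
    next
      case False
      then have Ypq: "Y = {p, q}" using Y(2) p(2) q(2) by (auto simp: card_2_iff)
      have "B_sign ori {p} Y * B_sign ori {q} Y = -1" "c p * c q = -1"
        using B_sign_edge_endpoints[OF sc ori] proper Y(1) False unfolding Ypq by auto
      then show ?thesis
        using \<phi>Y c[of p] c[of q] B_sign_cases[of ori "{p}" Y] B_sign_cases[of ori "{q}" Y]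
        unfolding p(1) by (auto simp: \<phi>_def)
    qed
  qed
  then show ?thesis by blast
qed

section \<open>Cartesian products\<close>

lemma B_connected_vertices_nonempty: "B_connected K i \<Longrightarrow> vertices K \<noteq> {}"
  by (force simp: B_connected_def B_verts_def faces_of_dim_def vertices_def)

lemma cart_prod_cases:
  assumes "Y \<in> cart_prod K1 K2"
  obtains (fst_fiber) G v where "G \<in> K1" "v \<in> vertices K2" "Y = (\<lambda>u. (u, v)) ` G"
    | (snd_fiber) u G where "u \<in> vertices K1" "G \<in> K2" "Y = (\<lambda>v. (u, v)) ` G"
  using assms unfolding cart_prod_def by blast

lemma fst_fiber_in_cart_prod: "v \<in> vertices K2 \<Longrightarrow> \<forall>Z\<in>K1. (\<lambda>u. (u, v)) ` Z \<in> cart_prod K1 K2"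
  unfolding cart_prod_def by blast

lemma snd_fiber_in_cart_prod: "u \<in> vertices K1 \<Longrightarrow> \<forall>Z\<in>K2. (\<lambda>v. (u, v)) ` Z \<in> cart_prod K1 K2"
  unfolding cart_prod_def by blast

lemma B_balanced_cart_prod_factors:
  assumes "vertices K1 \<noteq> {}" "vertices K2 \<noteq> {}"
    and "orientation K1 o1" "orientation K2 o2" "orientation (cart_prod K1 K2) o12"
    and "B_balanced (cart_prod K1 K2) i o12"
  shows "B_balanced K1 i o1" "B_balanced K2 i o2"
proof -
  obtain u v where "u \<in> vertices K1" "v \<in> vertices K2" using assms(1,2) by blast
  then show "B_balanced K1 i o1" "B_balanced K2 i o2"
    using B_balanced_reflect_embedding[OF _ assms(3,5) fst_fiber_in_cart_prod assms(6)]
      B_balanced_reflect_embedding[OF _ assms(4,5) snd_fiber_in_cart_prod assms(6)]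
    by (auto simp: inj_def)
qed

lemma B_adj_preimage:
  assumes "inj f" "simplicial_complex K" "G \<in> K"
    and "card X = i + 1" "card (f ` G) = i + 2" "X \<subseteq> f ` G"
  obtains F where "B_adj K i F G" "X = f ` F"
proof -
  obtain F where F: "F \<subseteq> G" "X = f ` F" using assms(6) by (auto simp: subset_image_iff)
  have "card (f ` Z) = card Z" for Z using assms(1) by (simp add: card_image inj_on_subset)
  then have "card F = i + 1" "card G = i + 2" using assms(4,5) F by auto
  moreover have "F \<in> K" using simplicial_complex_subset[OF assms(2,3) F(1)] \<open>card F = i + 1\<close> by force
  ultimately have "B_adj K i F G" using assms(3) F(1) by (simp add: B_adj_def faces_of_dim_def)
  then show ?thesis using that F(2) by blast
qed

lemma B_adj_cart_prodE:
  assumes "simplicial_complex K1" "simplicial_complex K2"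
    and "X \<in> faces_of_dim (cart_prod K1 K2) i" "Y \<in> faces_of_dim (cart_prod K1 K2) (i + 1)" "X \<subseteq> Y"
  obtains (fst_fiber) v F G where "v \<in> vertices K2" "B_adj K1 i F G"
      "X = (\<lambda>u. (u, v)) ` F" "Y = (\<lambda>u. (u, v)) ` G"
    | (snd_fiber) u F G where "u \<in> vertices K1" "B_adj K2 i F G"
      "X = (\<lambda>v. (u, v)) ` F" "Y = (\<lambda>v. (u, v)) ` G"
proof -
  have Y: "Y \<in> cart_prod K1 K2" "card X = i + 1" "card Y = i + 2"
    using assms(3,4) by (auto simp: faces_of_dim_def)
  from Y(1) show thesis
  proof (cases rule: cart_prod_cases)
    case (fst_fiber G v)
    then show thesis
      using B_adj_preimage[of "\<lambda>u. (u, v)" K1 G X i] that(1) assms(1,5) Y by (auto simp: inj_def)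
  next
    case (snd_fiber u G)
    then show thesis
      using B_adj_preimage[of "\<lambda>v. (u, v)" K2 G X i] that(2) assms(2,5) Y by (auto simp: inj_def)
  qed
qed

lemma B_potential_cart_prod_pos:
  assumes "0 < i" and sc: "simplicial_complex K1" "simplicial_complex K2"
    and ori: "orientation K1 o1" "orientation K2 o2" "orientation (cart_prod K1 K2) o12"
    and pot: "B_potential K1 i o1 \<phi>1" "B_potential K2 i o2 \<phi>2"
  shows "\<exists>\<phi>. B_potential (cart_prod K1 K2) i o12 \<phi>"
proof -
  let ?\<psi>1 = "\<lambda>v. pushforward_potential o1 o12 (\<lambda>u. (u, v)) \<phi>1"
  let ?\<psi>2 = "\<lambda>u. pushforward_potential o2 o12 (\<lambda>v. (u, v)) \<phi>2"
  text \<open>Since \<open>i > 0\<close>, every face of \<open>B\<^sub>i\<close> of the product lies in a unique fiber, which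
    \<open>\<phi>\<close> reads off from the projections.\<close>
  define \<phi> where "\<phi> X = (if card (snd ` X) = 1 then ?\<psi>1 (the_elem (snd ` X)) (fst ` X)
      else ?\<psi>2 (the_elem (fst ` X)) (snd ` X))" for X
  have \<phi>_fst: "\<phi> ((\<lambda>u. (u, v)) ` F) = ?\<psi>1 v F" if "F \<noteq> {}" for v F
  proof -
    have "snd ` (\<lambda>u. (u, v)) ` F = {v}" "fst ` (\<lambda>u. (u, v)) ` F = F"
      using that by (auto simp: image_image)
    then show ?thesis by (simp add: \<phi>_def)
  qed
  have \<phi>_snd: "\<phi> ((\<lambda>v. (u, v)) ` F) = ?\<psi>2 u F" if "2 \<le> card F" for u F
  proof -
    have "F \<noteq> {}" using that by auto
    then have "snd ` (\<lambda>v. (u, v)) ` F = F" "fst ` (\<lambda>v. (u, v)) ` F = {u}"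
      by (auto simp: image_image)
    then show ?thesis using that by (simp add: \<phi>_def)
  qed
  have "B_potential (cart_prod K1 K2) i o12 \<phi>"
  proof (rule B_potentialI)
    show "\<phi> X = 1 \<or> \<phi> X = -1" for X
      unfolding \<phi>_def
      using pushforward_potential_cases[OF pot(1), of o12 "\<lambda>u. (u, the_elem (snd ` X))" "fst ` X"]
        pushforward_potential_cases[OF pot(2), of o12 "\<lambda>v. (the_elem (fst ` X), v)" "snd ` X"]
      by auto
  next
    fix X Y assume "X \<in> faces_of_dim (cart_prod K1 K2) i"
      "Y \<in> faces_of_dim (cart_prod K1 K2) (i + 1)" "X \<subseteq> Y"
    with sc show "B_sign o12 X Y = \<phi> X * \<phi> Y"
    proof (cases rule: B_adj_cart_prodE)
      case (fst_fiber v F G)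
      then have "F \<noteq> {}" "G \<noteq> {}" by (auto simp: B_adj_def faces_of_dim_def)
      then show ?thesis
        using B_sign_image_pushforward_potential[OF _ ori(1,3) fst_fiber_in_cart_prod pot(1)] fst_fiber
        by (simp add: \<phi>_fst inj_def)
    next
      case (snd_fiber u F G)
      then have "2 \<le> card F" "2 \<le> card G" using \<open>0 < i\<close> by (auto simp: B_adj_def faces_of_dim_def)
      then show ?thesis
        using B_sign_image_pushforward_potential[OF _ ori(2,3) snd_fiber_in_cart_prod pot(2)] snd_fiber
        by (simp add: \<phi>_snd inj_def)
    qed
  qed
  then show ?thesis by blast
qed

lemma simplicial_complex_cart_prod:
  assumes "simplicial_complex K1" "simplicial_complex K2"
  shows "simplicial_complex (cart_prod K1 K2)"
proof -
  have fin: "finite K1" "finite K2" "finite (vertices K1)" "finite (vertices K2)"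
    using assms by (auto simp: simplicial_complex_def vertices_def)
  have "cart_prod K1 K2 = (\<lambda>(F, v). (\<lambda>u. (u, v)) ` F) ` (K1 \<times> vertices K2) \<union>
      (\<lambda>(u, F). (\<lambda>v. (u, v)) ` F) ` (vertices K1 \<times> K2)"
    unfolding cart_prod_def by auto
  then have "finite (cart_prod K1 K2)" using fin by simp
  moreover have "finite Y \<and> Y \<noteq> {} \<and> (\<forall>Z. Z \<subseteq> Y \<and> Z \<noteq> {} \<longrightarrow> Z \<in> cart_prod K1 K2)"
    if "Y \<in> cart_prod K1 K2" for Y
    using that
  proof (cases rule: cart_prod_cases)
    case (fst_fiber G v)
    have "Z \<in> cart_prod K1 K2" if Z: "Z \<subseteq> Y" "Z \<noteq> {}" for Z
    proof -
      obtain F where "F \<subseteq> G" "Z = (\<lambda>u. (u, v)) ` F" using Z(1) fst_fiber(3) by (auto simp: subset_image_iff)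
      moreover have "F \<in> K1" using simplicial_complex_subset[OF assms(1) fst_fiber(1)] calculation Z(2) by blast
      ultimately show ?thesis using fst_fiber_in_cart_prod[OF fst_fiber(2)] by blast
    qed
    then show ?thesis using assms(1) fst_fiber by (auto simp: simplicial_complex_def)
  next
    case (snd_fiber u G)
    have "Z \<in> cart_prod K1 K2" if Z: "Z \<subseteq> Y" "Z \<noteq> {}" for Z
    proof -
      obtain F where "F \<subseteq> G" "Z = (\<lambda>v. (u, v)) ` F" using Z(1) snd_fiber(3) by (auto simp: subset_image_iff)
      moreover have "F \<in> K2" using simplicial_complex_subset[OF assms(2) snd_fiber(2)] calculation Z(2) by blast
      ultimately show ?thesis using snd_fiber_in_cart_prod[OF snd_fiber(1)] by blast
    qed
    then show ?thesis using assms(2) snd_fiber by (auto simp: simplicial_complex_def)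
  qed
  ultimately show ?thesis unfolding simplicial_complex_def by blast
qed

lemma cart_prod_edge:
  assumes "simplicial_complex K1" "simplicial_complex K2" "{p, q} \<in> cart_prod K1 K2"
  shows "snd p = snd q \<and> {fst p, fst q} \<in> K1 \<or> fst p = fst q \<and> {snd p, snd q} \<in> K2"
  using assms(3)
proof (cases rule: cart_prod_cases)
  case (fst_fiber G v)
  then have "p \<in> (\<lambda>u. (u, v)) ` G" "q \<in> (\<lambda>u. (u, v)) ` G" by (metis insertI1 insertI2)+
  then have "snd p = snd q" "{fst p, fst q} \<subseteq> G" by auto
  then show ?thesis using simplicial_complex_subset[OF assms(1) fst_fiber(1)] by blast
next
  case (snd_fiber u G)
  then have "p \<in> (\<lambda>v. (u, v)) ` G" "q \<in> (\<lambda>v. (u, v)) ` G" by (metis insertI1 insertI2)+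
  then have "fst p = fst q" "{snd p, snd q} \<subseteq> G" by auto
  then show ?thesis using simplicial_complex_subset[OF assms(2) snd_fiber(2)] by blast
qed

lemma B_potential_cart_prod_0:
  assumes sc: "simplicial_complex K1" "simplicial_complex K2"
    and ori: "orientation K1 o1" "orientation K2 o2" "orientation (cart_prod K1 K2) o12"
    and pot: "B_potential K1 0 o1 \<phi>1" "B_potential K2 0 o2 \<phi>2"
  shows "\<exists>\<phi>. B_potential (cart_prod K1 K2) 0 o12 \<phi>"
proof (rule B0_potential_of_colouring[OF simplicial_complex_cart_prod[OF sc] ori(3)])
  let ?c = "\<lambda>p. \<phi>1 {fst p} * \<phi>2 {snd p}"
  have \<phi>: "\<phi>1 X = 1 \<or> \<phi>1 X = -1" "\<phi>2 Y = 1 \<or> \<phi>2 Y = -1" for X Y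
    using pot by (simp_all add: B_potential_def)
  show "?c p = 1 \<or> ?c p = -1" for p
    using \<phi>(1)[of "{fst p}"] \<phi>(2)[of "{snd p}"] by auto
  show "?c p * ?c q = -1" if "{p, q} \<in> cart_prod K1 K2" "p \<noteq> q" for p q
    using cart_prod_edge[OF sc that(1)]
  proof (elim disjE conjE)
    assume "snd p = snd q" "{fst p, fst q} \<in> K1"
    then show ?thesis
      using B0_potential_edge[OF sc(1) ori(1) pot(1)] \<phi>(2)[of "{snd p}"] that(2)
      by (cases p, cases q) auto
  next
    assume "fst p = fst q" "{snd p, snd q} \<in> K2"
    then show ?thesis
      using B0_potential_edge[OF sc(2) ori(2) pot(2)] \<phi>(1)[of "{fst p}"] that(2)
      by (cases p, cases q) auto
  qed
qed

lemma B_potential_cart_prod: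
  assumes sc: "simplicial_complex K1" "simplicial_complex K2"
    and ori: "orientation K1 o1" "orientation K2 o2" "orientation (cart_prod K1 K2) o12"
    and pot: "B_potential K1 i o1 \<phi>1" "B_potential K2 i o2 \<phi>2"
  shows "\<exists>\<phi>. B_potential (cart_prod K1 K2) i o12 \<phi>"
proof (cases "i = 0")
  case True
  then show ?thesis using B_potential_cart_prod_0[OF sc ori] pot by simp
next
  case False
  then show ?thesis using B_potential_cart_prod_pos[OF _ sc ori pot] by simp
qed

theorem mainTheorem13:
  fixes K1 :: "'a set set" and K2 :: "'b set set" and i :: nat
    and o1 :: "'a set \<Rightarrow> 'a list" and o2 :: "'b set \<Rightarrow> 'b list"
    and o12 :: "('a \<times> 'b) set \<Rightarrow> ('a \<times> 'b) list"
  assumes "simplicial_complex K1" and "simplicial_complex K2"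
    and "B_connected K1 i" and "B_connected K2 i"
    and "orientation K1 o1" and "orientation K2 o2"
    and "orientation (cart_prod K1 K2) o12"
  shows "B_balanced (cart_prod K1 K2) i o12 \<longleftrightarrow> B_balanced K1 i o1 \<and> B_balanced K2 i o2"
proof
  assume bal: "B_balanced (cart_prod K1 K2) i o12"
  have "vertices K1 \<noteq> {}" "vertices K2 \<noteq> {}"
    using B_connected_vertices_nonempty assms(3,4) by auto
  then show "B_balanced K1 i o1 \<and> B_balanced K2 i o2"
    using B_balanced_cart_prod_factors[OF _ _ assms(5-7) bal] by simp
next
  assume "B_balanced K1 i o1 \<and> B_balanced K2 i o2"
  then obtain \<phi>1 \<phi>2 where "B_potential K1 i o1 \<phi>1" "B_potential K2 i o2 \<phi>2"
    using B_balanced_iff_potential[OF assms(3)] B_balanced_iff_potential[OF assms(4)] by auto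
  then obtain \<phi> where "B_potential (cart_prod K1 K2) i o12 \<phi>"
    using B_potential_cart_prod[OF assms(1,2,5-7)] by blast
  then show "B_balanced (cart_prod K1 K2) i o12" by (rule B_balanced_if_potential)
qed

end
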